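(* There exists a constant $c>0$, independent of $n$, such that for all sufficiently large $n$, \[ \zeta_n> -c+\frac{\min\{1-\beta,\alpha\}}{\lambda_1}\log n . \]
   Context: Fix constants $r_0,d_0\ge 0$ with $\lambda_0:=r_0-d_0<0$, $d_1>0$, $k>1$, $\alpha\in(0,1)$, $\beta\in(0,1)$. Let $f:[0,\infty)^2\to[0,\infty)$ satisfy: (A1) $f$ is Lipschitz continuous; (A2) $f(x,y)=r_1$ when $x+y=0$ and $f(x,y)=d_1$ when $x+y=1$, where $r_1:=f(0,0)>d_1$; (A3) $f(x,y)=\Phi(x+y)$ for some non-increasing function $\Phi:[0,\infty)\to[0,\infty)$; (A4) $f(x,y)\to0$ as $x\to\infty$ and as $y\to\infty$; (A5) $f(x,y)\ge \lambda_1(1-(x+y))+d_1$ for all $x,y\ge0$, where $\lambda_1:=r_1-d_1>0$. Put $\phi(x,y):=f(x,y)-d_1$. For each integer $n\ge1$ let $K=K(n):=kn$ and let $(y_0,y_1,y_\beta)$ solve \[ \dot y_0=\lambda_0 y_0,\qquad \dot y_1=\phi(y_0,y_1)\,y_1+n^{-\alpha}y_0,\qquad \dot y_\beta=\phi(y_0,y_1)\,y_\beta, \] with $(y_0(0),y_1(0),y_\beta(0))=(n/K,\,n^\beta/K,\,n^\beta/K)$. Define the deterministic recurrence time $\zeta_n:=\inf\{t>0: y_1(t)=n/K\}$. *)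

theory Defs
  imports "HOL-Analysis.Analysis"
begin

text \<open>Deterministic recurrence time: infimum over the extended reals, so that
  the infimum of the empty set is +infinity.\<close>
definition recurrence_time :: "(real \<Rightarrow> real) \<Rightarrow> real \<Rightarrow> ereal" where
  "recurrence_time y1 a = Inf (ereal ` {t. t > 0 \<and> y1 t = a})"

end

theory Submission imports Defs begin

text \<open>Since f is maximal at the origin, the growth rate of y1 is at most
  \<lambda>1, and y0 decays from 1/k, so while y1 is positive it obeys
  y1' \<le> \<lambda>1 y1 + n^(-\<alpha>)/k.  Comparing with the solution of this affine equation
  started at the last time y1 was nonpositive, y1 needs time at least
  -ln(n^(\<beta>-1) + n^(-\<alpha>)/\<lambda>1)/\<lambda>1 \<ge> (min (1-\<beta>) \<alpha> ln n - ln(1 + 1/\<lambda>1))/\<lambda>1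
  to climb from n^(\<beta>-1)/k to 1/k.\<close>

lemma linear_ode_solution:
  fixes Y :: "real \<Rightarrow> real"
  assumes ode: "\<forall>t\<ge>0. (Y has_real_derivative l * Y t) (at t within {0..})"
    and t: "t \<ge> 0"
  shows "Y t = Y 0 * exp (l * t)"
proof -
  have "\<exists>c. \<forall>x\<in>{0::real..}. Y x * exp (- l * x) = c"
  proof (rule has_field_derivative_zero_constant)
    fix x :: real assume x: "x \<in> {0..}"
    have "((\<lambda>x. Y x * exp (- l * x)) has_real_derivative
        (l * Y x) * exp (- l * x) + Y x * (exp (- l * x) * (- l * 1))) (at x within {0..})"
      using ode x by (auto intro!: derivative_eq_intros)
    then show "((\<lambda>x. Y x * exp (- l * x)) has_real_derivative 0) (at x within {0..})"
      by (simp add: algebra_simps)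
  qed simp
  then obtain c where c: "\<And>x. x \<ge> 0 \<Longrightarrow> Y x * exp (- l * x) = c" by auto
  have "Y t * exp (- l * t) = Y 0" using c[of 0] c[OF t] by simp
  then show ?thesis by (simp add: exp_minus field_simps)
qed

lemma last_nonpositive_point:
  fixes Y :: "real \<Rightarrow> real"
  assumes cont: "continuous_on {a..b} Y" and ab: "a < b" and pos: "Y b > 0"
  shows "\<exists>s\<in>{a..<b}. (s = a \<or> Y s \<le> 0) \<and> (\<forall>x\<in>{s<..b}. Y x > 0)"
proof -
  define S where "S = insert a ({a..b} \<inter> Y -` {..0})"
  have "closed S"
    unfolding S_def by (intro closed_insert continuous_closed_preimage cont) auto
  moreover have bdd: "bdd_above S"
    unfolding S_def by (rule bdd_aboveI[of _ b]) (use ab in auto)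
  ultimately have s_in: "Sup S \<in> S"
    by (intro closed_contains_Sup) (auto simp: S_def)
  have s_upper: "x \<le> Sup S" if "x \<in> S" for x
    using bdd that by (rule cSup_upper[rotated])
  have "Sup S \<in> {a..<b}"
    using s_in ab pos by (cases "Sup S = b") (auto simp: S_def)
  moreover have "Y x > 0" if "x \<in> {Sup S<..b}" for x
  proof (rule ccontr)
    assume "\<not> Y x > 0"
    then have "x \<in> S" using that \<open>Sup S \<in> {a..<b}\<close> by (auto simp: S_def)
    then show False using s_upper that by fastforce
  qed
  ultimately show ?thesis using s_in by (auto simp: S_def)
qed

lemma differential_inequality_exp_weight_le:
  fixes Y Y' :: "real \<Rightarrow> real"
  assumes l: "l \<noteq> 0" and st: "s \<le> t" and cont: "continuous_on {s..t} Y"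
    and deriv: "\<forall>x\<in>{s<..<t}. (Y has_real_derivative Y' x) (at x)"
    and bound: "\<forall>x\<in>{s<..<t}. Y' x \<le> l * Y x + c"
  shows "exp (- (l * t)) * (Y t + c / l) \<le> exp (- (l * s)) * (Y s + c / l)"
proof (rule DERIV_nonpos_imp_decreasing_open[OF st])
  show "continuous_on {s..t} (\<lambda>x. exp (- (l * x)) * (Y x + c / l))"
    by (intro continuous_intros cont)
  fix x assume x: "s < x" "x < t"
  have "((\<lambda>x. exp (- (l * x)) * (Y x + c / l)) has_real_derivative
      exp (- (l * x)) * (Y' x - l * Y x - c)) (at x)"
    using deriv x l by (auto intro!: derivative_eq_intros simp: algebra_simps)
  moreover have "exp (- (l * x)) * (Y' x - l * Y x - c) \<le> 0"
    using bound x by (intro mult_nonneg_nonpos) force+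
  ultimately show "\<exists>y. ((\<lambda>x. exp (- (l * x)) * (Y x + c / l)) has_real_derivative y) (at x) \<and> y \<le> 0"
    by blast
qed

text \<open>The affine comparison is only needed where Y is positive: before the last
  time Y was nonpositive the weighted quantity is at most c/l anyway.\<close>

lemma differential_inequality_positive_part:
  fixes Y Y' :: "real \<Rightarrow> real"
  assumes l: "l > 0" and c: "c \<ge> 0" and t: "t \<ge> 0"
    and deriv: "\<forall>x\<ge>0. (Y has_real_derivative Y' x) (at x within {0..})"
    and bound: "\<forall>x>0. Y x > 0 \<longrightarrow> Y' x \<le> l * Y x + c"
  shows "exp (- (l * t)) * (Y t + c / l) \<le> max (Y 0) 0 + c / l"
proof -
  define g where "g x = exp (- (l * x)) * (Y x + c / l)" for x
  have g_nonpos: "g x \<le> max (Y 0) 0 + c / l" if "x \<ge> 0" "Y x \<le> 0" for x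
  proof -
    have "g x \<le> exp (- (l * x)) * (c / l)"
      unfolding g_def using that by (intro mult_left_mono) auto
    also have "\<dots> \<le> c / l"
      using l c that by (intro mult_left_le_one_le) auto
    finally show ?thesis by simp
  qed
  consider "t = 0" | "Y t \<le> 0" | "t > 0" "Y t > 0" using t by fastforce
  then show ?thesis
  proof cases
    case 1
    then show ?thesis by simp
  next
    case 2
    then show ?thesis using g_nonpos t by (simp add: g_def)
  next
    case 3
    have cont: "continuous_on {0..} Y"
      unfolding continuous_on_eq_continuous_within using deriv by (auto intro: DERIV_continuous)
    have "continuous_on {0..t} Y" by (rule continuous_on_subset[OF cont]) auto
    then obtain s where s: "s \<in> {0..<t}" "s = 0 \<or> Y s \<le> 0" and pos: "\<forall>x\<in>{s<..t}. Y x > 0"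
      using last_nonpositive_point 3 by blast
    have "g t \<le> g s"
      unfolding g_def
    proof (rule differential_inequality_exp_weight_le)
      show "continuous_on {s..t} Y" by (rule continuous_on_subset[OF cont]) (use s in auto)
      show "\<forall>x\<in>{s<..<t}. (Y has_real_derivative Y' x) (at x)"
      proof
        fix x assume "x \<in> {s<..<t}"
        then have "x > 0" using s by auto
        then have "at x within {0..} = at x" by (intro at_within_interior) auto
        then show "(Y has_real_derivative Y' x) (at x)" using deriv \<open>x > 0\<close> by (metis less_imp_le)
      qed
      show "\<forall>x\<in>{s<..<t}. Y' x \<le> l * Y x + c"
        using bound pos s by auto
    qed (use l s in auto)
    also have "g s \<le> max (Y 0) 0 + c / l"
      using s g_nonpos by (auto simp: g_def)
    finally show ?thesis by (simp add: g_def)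
  qed
qed

lemma recurrence_time_ge:
  fixes \<phi> :: "real \<Rightarrow> real \<Rightarrow> real" and Y0 Y1 :: "real \<Rightarrow> real"
  assumes l0: "l0 \<le> 0" and l1: "l1 > 0" and a: "a \<ge> 0" and k: "k > 0" and b: "b \<ge> 0"
    and \<phi>_le: "\<forall>x y. 0 \<le> x \<longrightarrow> 0 \<le> y \<longrightarrow> \<phi> x y \<le> l1"
    and ode0: "\<forall>t\<ge>0. (Y0 has_real_derivative l0 * Y0 t) (at t within {0..})"
    and ode1: "\<forall>t\<ge>0. (Y1 has_real_derivative \<phi> (Y0 t) (Y1 t) * Y1 t + a * Y0 t) (at t within {0..})"
    and init0: "Y0 0 = 1 / k" and init1: "Y1 0 = b"
  shows "ereal (- ln (k * b + a / l1) / l1) \<le> recurrence_time Y1 (1 / k)"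
  unfolding recurrence_time_def
proof (rule Inf_greatest, clarify)
  fix t assume t: "t > 0" "Y1 t = 1 / k"
  have Y0_bounds: "0 \<le> Y0 x \<and> Y0 x \<le> 1 / k" if "x \<ge> 0" for x
  proof -
    have "exp (l0 * x) \<le> 1" using l0 that by (simp add: mult_nonpos_nonneg)
    then show ?thesis
      using linear_ode_solution[OF ode0 that] init0 k by (simp add: divide_right_mono)
  qed
  have growth: "\<phi> (Y0 x) (Y1 x) * Y1 x + a * Y0 x \<le> l1 * Y1 x + a / k"
    if "x > 0" "Y1 x > 0" for x
  proof -
    have "\<phi> (Y0 x) (Y1 x) * Y1 x \<le> l1 * Y1 x"
      using \<phi>_le Y0_bounds[of x] that by (intro mult_right_mono) auto
    moreover have "a * Y0 x \<le> a * (1 / k)"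
      using Y0_bounds[of x] that a by (intro mult_left_mono) auto
    ultimately show ?thesis by simp
  qed
  have "exp (- (l1 * t)) * (1 / k + a / k / l1) \<le> b + a / k / l1"
    using differential_inequality_positive_part[OF l1 _ _ ode1, of "a / k" t] growth a k b t init1
    by auto
  then have "exp (- (l1 * t)) * (1 + a / l1) \<le> k * b + a / l1"
    using k by (simp add: field_simps)
  moreover have "exp (- (l1 * t)) \<le> exp (- (l1 * t)) * (1 + a / l1)"
    using a l1 by simp
  ultimately have "exp (- (l1 * t)) \<le> k * b + a / l1" by linarith
  then have "- (l1 * t) \<le> ln (k * b + a / l1)"
    by (subst ln_ge_iff) (auto intro: less_le_trans[OF exp_gt_zero])
  then have "- ln (k * b + a / l1) / l1 \<le> t"
    using l1 by (simp add: field_simps)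
  then show "ereal (- ln (k * b + a / l1) / l1) \<le> ereal t" by simp
qed

lemma ln_powr_sum_le:
  fixes x l p q :: real
  assumes x: "x \<ge> 1" and l: "l > 0"
  shows "ln (x powr (- p) + x powr (- q) / l) \<le> - min p q * ln x + ln (1 + 1 / l)"
proof -
  have C: "1 + 1 / l > 0" using l by (simp add: add_pos_pos)
  have "x powr (- p) + x powr (- q) / l \<le> x powr (- min p q) + x powr (- min p q) / l"
    using x l by (intro add_mono divide_right_mono powr_mono) auto
  also have "\<dots> = x powr (- min p q) * (1 + 1 / l)"
    by (simp add: field_simps)
  finally have "ln (x powr (- p) + x powr (- q) / l) \<le> ln (x powr (- min p q) * (1 + 1 / l))"
    using x l by (intro ln_mono) (auto simp: add_pos_pos)
  also have "\<dots> = - min p q * ln x + ln (1 + 1 / l)"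
    using x C by (simp add: ln_mult ln_powr)
  finally show ?thesis .
qed

theorem lemmaA2:
  fixes r0 d0 d1 k \<alpha> \<beta> :: real
    and f :: "real \<Rightarrow> real \<Rightarrow> real"
    and y0 y1 y\<beta> :: "nat \<Rightarrow> real \<Rightarrow> real"
  assumes r0: "r0 \<ge> 0" and d0: "d0 \<ge> 0" and lam0: "r0 - d0 < 0"
    and d1: "d1 > 0" and k: "k > 1"
    and \<alpha>: "0 < \<alpha>" "\<alpha> < 1" and \<beta>: "0 < \<beta>" "\<beta> < 1"
    and f_nonneg: "\<forall>x y. 0 \<le> x \<longrightarrow> 0 \<le> y \<longrightarrow> 0 \<le> f x y"
    and A1: "\<exists>L. L-lipschitz_on ({0..} \<times> {0..}) (\<lambda>(x, y). f x y)"
    and A2a: "\<forall>x y. 0 \<le> x \<longrightarrow> 0 \<le> y \<longrightarrow> x + y = 0 \<longrightarrow> f x y = f 0 0"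
    and A2b: "\<forall>x y. 0 \<le> x \<longrightarrow> 0 \<le> y \<longrightarrow> x + y = 1 \<longrightarrow> f x y = d1"
    and A2c: "f 0 0 > d1"
    and A3: "\<exists>\<Phi> :: real \<Rightarrow> real. (\<forall>s t. 0 \<le> s \<longrightarrow> s \<le> t \<longrightarrow> \<Phi> t \<le> \<Phi> s)
               \<and> (\<forall>s \<ge> 0. 0 \<le> \<Phi> s)
               \<and> (\<forall>x y. 0 \<le> x \<longrightarrow> 0 \<le> y \<longrightarrow> f x y = \<Phi> (x + y))"
    and A4x: "\<forall>y \<ge> 0. ((\<lambda>x. f x y) \<longlongrightarrow> 0) at_top"
    and A4y: "\<forall>x \<ge> 0. ((\<lambda>y. f x y) \<longlongrightarrow> 0) at_top"
    and A5: "\<forall>x y. 0 \<le> x \<longrightarrow> 0 \<le> y \<longrightarrow> f x y \<ge> (f 0 0 - d1) * (1 - (x + y)) + d1"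
    and ode0: "\<forall>n \<ge> 1. \<forall>t \<ge> 0.
       (y0 n has_real_derivative (r0 - d0) * y0 n t) (at t within {0..})"
    and ode1: "\<forall>n \<ge> 1. \<forall>t \<ge> 0.
       (y1 n has_real_derivative
          (f (y0 n t) (y1 n t) - d1) * y1 n t + real n powr (-\<alpha>) * y0 n t) (at t within {0..})"
    and odeb: "\<forall>n \<ge> 1. \<forall>t \<ge> 0.
       (y\<beta> n has_real_derivative (f (y0 n t) (y1 n t) - d1) * y\<beta> n t) (at t within {0..})"
    and init: "\<forall>n \<ge> 1. y0 n 0 = real n / (k * real n)
                 \<and> y1 n 0 = real n powr \<beta> / (k * real n)
                 \<and> y\<beta> n 0 = real n powr \<beta> / (k * real n)"
  shows "\<exists>c > 0. \<forall>\<^sub>F n in sequentially.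
           recurrence_time (y1 n) (real n / (k * real n))
             > ereal (- c + min (1 - \<beta>) \<alpha> / (f 0 0 - d1) * ln (real n))"
proof -
  define l1 where "l1 = f 0 0 - d1"
  define c where "c = ln (1 + 1 / l1) / l1 + 1"
  have l1: "l1 > 0" using A2c by (simp add: l1_def)
  have "c > 0" using l1 by (simp add: c_def add_nonneg_pos)
  have f_le: "\<forall>x y. 0 \<le> x \<longrightarrow> 0 \<le> y \<longrightarrow> f x y - d1 \<le> l1"
    using A3 by (fastforce simp: l1_def)
  have "ereal (- c + min (1 - \<beta>) \<alpha> / l1 * ln (real n)) < recurrence_time (y1 n) (real n / (k * real n))"
    if n: "n \<ge> 1" for n :: nat
  proof -
    have kb: "k * (real n powr \<beta> / (k * real n)) = real n powr (- (1 - \<beta>))"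
      using k n by (simp add: powr_diff powr_minus field_simps)
    have "- c + min (1 - \<beta>) \<alpha> / l1 * ln (real n)
        < (min (1 - \<beta>) \<alpha> * ln (real n) - ln (1 + 1 / l1)) / l1"
      by (simp add: c_def diff_divide_distrib)
    also have "\<dots> \<le> - ln (real n powr (- (1 - \<beta>)) + real n powr (- \<alpha>) / l1) / l1"
      using ln_powr_sum_le[of "real n" l1 "1 - \<beta>" \<alpha>] n l1 by (intro divide_right_mono) auto
    also have "ereal \<dots> \<le> recurrence_time (y1 n) (1 / k)"
      using recurrence_time_ge[of "r0 - d0" l1 "real n powr (- \<alpha>)" k "real n powr \<beta> / (k * real n)"
          "\<lambda>x y. f x y - d1" "y0 n" "y1 n"] lam0 l1 k f_le ode0 ode1 init n kb by auto
    finally show ?thesis using n by simp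
  qed
  then show ?thesis
    using \<open>c > 0\<close> by (auto simp: l1_def eventually_sequentially)
qed

end
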